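(* Let $\Lambda$ be a countable index set, $\mathbb{Y}$ a Banach space, and $(\overline{a}_j)_{j\in\Lambda}$, $(\overline{r}_j)_{j\in\Lambda}$ sequences of positive reals with $\overline{a}_j\overline{r}_j^{-1}\to 0$ (i.e. for every $\varepsilon>0$ all but finitely many $j$ satisfy $\overline{a}_j\overline{r}_j^{-1}\le\varepsilon$). For positive weights $\omega$ write $\|x\|_{\omega,p}=(\sum_{j}\omega_j^p|x_j|^p)^{1/p}$ and $\ell^p_\omega=\{x:\|x\|_{\omega,p}<\infty\}$. Suppose that $D\subseteq\ell^2_{\overline{a}}$ is closed with $D\cap\ell^1_{\overline{r}}\neq\emptyset$, and that $F\colon D\to\mathbb{Y}$ satisfies, for some $L>0$, $$\tfrac1L\|x^{(1)}-x^{(2)}\|_{\overline{a},2}\le\|F(x^{(1)})-F(x^{(2)})\|_{\mathbb{Y}}\le L\|x^{(1)}-x^{(2)}\|_{\overline{a},2}\quad\text{for all }x^{(1)},x^{(2)}\in D.$$ For $t\in(0,2)$ let $\|x\|_{k_t}=\sup_{\alpha>0}\alpha\big(\sum_{j\in\Lambda}\overline{a}_j^{-2}\overline{r}_j^2\mathbb{1}_{\{\overline{a}_j^{-2}\overline{r}_j\alpha<|x_j|\}}\big)^{1/t}$. Let $t\in(0,1)$, $\varrho>0$ and $x^+\in D$. If $\|x^+\|_{k_t}\le\varrho$, then the variational source condition $$\|x^+-x\|_{\overline{r},1}+\|x^+\|_{\overline{r},1}-\|x\|_{\overline{r},1}\le C_{\mathrm{vsc}}\|F(x^+)-F(x)\|_{\mathbb{Y}}^{\frac{2-2t}{2-t}}\quad\text{for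 all }x\in D\cap\ell^1_{\overline{r}}$$ holds with $C_{\mathrm{vsc}}=(2+4(2^{1-t}-1)^{-1})L^{\frac{2-2t}{2-t}}\varrho^{\frac{t}{2-t}}$. If in addition $D$ is closed under coordinate shrinkage (i.e. $x\in D$, $z\in\ell^2_{\overline{a}}$ with $|z_j|\le|x_j|$ for all $j$ implies $z\in D$), then this variational source condition implies $\|x^+\|_{k_t}\le L^{\frac{2-2t}{t}}C_{\mathrm{vsc}}^{\frac{2-t}{t}}$.
   Context: Setting: weighted $\ell^1$ Tikhonov regularization for a possibly nonlinear forward operator $F$ mapping sequences to a Banach space $\mathbb{Y}$, with two-sided Lipschitz bounds relative to the weighted $\ell^2$ norm $\|\cdot\|_{\overline{a},2}$. The quasi-norm $\|\cdot\|_{k_t}$ defines a weak (weighted Lorentz-type) sequence space $k_t$. *)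

theory Defs
  imports "HOL-Analysis.Analysis"
begin

text \<open>Sequences indexed by a countable type 'i (the index set Lambda is UNIV).\<close>

definition wl :: "('i \<Rightarrow> real) \<Rightarrow> real \<Rightarrow> ('i \<Rightarrow> real) \<Rightarrow> bool" where
  "wl w p x \<longleftrightarrow> (\<lambda>j. (w j * \<bar>x j\<bar>) powr p) summable_on UNIV"

text \<open>Weighted norm ||x||_{w,p}; meaningful for x with wl w p x.\<close>
definition wnorm :: "('i \<Rightarrow> real) \<Rightarrow> real \<Rightarrow> ('i \<Rightarrow> real) \<Rightarrow> real" where
  "wnorm w p x = (\<Sum>\<^sub>\<infinity>j. (w j * \<bar>x j\<bar>) powr p) powr (1 / p)"

definition epow :: "ennreal \<Rightarrow> real \<Rightarrow> ennreal" where
  "epow c e = (if c = \<infinity> then \<infinity> else ennreal (enn2real c powr e))"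

definition kt_norm :: "('i \<Rightarrow> real) \<Rightarrow> ('i \<Rightarrow> real) \<Rightarrow> real \<Rightarrow> ('i \<Rightarrow> real) \<Rightarrow> ennreal" where
  "kt_norm a r t x = (SUP \<alpha>\<in>{0<..}. ennreal \<alpha> *
      epow (\<Sum>\<^sub>\<infinity>j. ennreal ((a j) powr (-2) * (r j)\<^sup>2 *
               (if (a j) powr (-2) * r j * \<alpha> < \<bar>x j\<bar> then 1 else 0))) (1 / t))"

definition closed_wl2 :: "('i \<Rightarrow> real) \<Rightarrow> ('i \<Rightarrow> real) set \<Rightarrow> bool" where
  "closed_wl2 a D \<longleftrightarrow> (\<forall>X x. (\<forall>n. X n \<in> D) \<and> wl a 2 x \<and>
      (\<lambda>n. wnorm a 2 (\<lambda>j. X n j - x j)) \<longlonglongrightarrow> 0 \<longrightarrow> x \<in> D)"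

definition shrink_closed :: "('i \<Rightarrow> real) \<Rightarrow> ('i \<Rightarrow> real) set \<Rightarrow> bool" where
  "shrink_closed a D \<longleftrightarrow> (\<forall>x z. x \<in> D \<and> wl a 2 z \<and> (\<forall>j. \<bar>z j\<bar> \<le> \<bar>x j\<bar>) \<longrightarrow> z \<in> D)"

text \<open>The left-hand side
  contains ||x+||_{r,1}; it is finite (i.e. x+ in l^1_r) as part of the condition,
  since otherwise the left-hand side is +infinity.\<close>
definition vsc :: "('i \<Rightarrow> real) \<Rightarrow> (('i \<Rightarrow> real) \<Rightarrow> 'y::real_normed_vector) \<Rightarrow>
    ('i \<Rightarrow> real) set \<Rightarrow> ('i \<Rightarrow> real) \<Rightarrow> real \<Rightarrow> real \<Rightarrow> bool" where
  "vsc r F D xp C e \<longleftrightarrow> wl r 1 xp \<and>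
     (\<forall>x\<in>D. wl r 1 x \<longrightarrow>
        wnorm r 1 (\<lambda>j. xp j - x j) + wnorm r 1 xp - wnorm r 1 x \<le> C * norm (F xp - F x) powr e)"

end

(*
  Write b_j = r_j / a_j^2 and w_j = (r_j / a_j)^2. The bound ||x+||_{k_t} <= rho says exactly
  that every level set J_alpha = {j. b_j alpha < |x+_j|} has w-mass at most (rho / alpha)^t.

  For the source condition, split the index set at J_alpha. On J_alpha, Cauchy-Schwarz bounds
  the r-weighted l^1 terms by (rho / alpha)^(t/2) ||x+ - x||_{a,2} <= (rho / alpha)^(t/2) L delta,
  where delta = ||F x+ - F x||. Off J_alpha only x+ matters, and a dyadic decomposition of its
  values against the weak-type bound gives a geometric series of size rho^t alpha^(1-t).
  Choosing alpha to balance the two terms produces the exponent (2 - 2t) / (2 - t).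

  Conversely, shrinking x+ towards 0 by b_j alpha on J_alpha gives an admissible x for which
  both sides of the source condition are explicit in the w-mass W of J_alpha: the condition
  reads 2 alpha W <= C (L alpha sqrt W)^((2-2t)/(2-t)), which is the k_t bound at level alpha.
*)
theory Submission
  imports Defs
begin

section \<open>Weighted sequence spaces with positive weights\<close>

lemma summable_on_diff:
  fixes f g :: "'a \<Rightarrow> 'b::{topological_ab_group_add, t2_space}"
  assumes "f summable_on A" "g summable_on A"
  shows "(\<lambda>x. f x - g x) summable_on A"
  using summable_on_add[OF assms(1) summable_on_uminus[THEN iffD2, OF assms(2)]] by simp

lemma infsum_diff:
  fixes f g :: "'a \<Rightarrow> 'b::{topological_ab_group_add, t2_space}"
  assumes "f summable_on A" "g summable_on A"
  shows "(\<Sum>\<^sub>\<infinity>x\<in>A. f x - g x) = infsum f A - infsum g A"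
  using infsum_add[OF assms(1) summable_on_uminus[THEN iffD2, OF assms(2)]] by (simp add: infsum_uminus)

lemma wl_1_iff:
  assumes "\<And>j. r j \<ge> 0"
  shows "wl r 1 x \<longleftrightarrow> (\<lambda>j. r j * \<bar>x j\<bar>) summable_on UNIV"
  using assms by (simp add: wl_def)

lemma wnorm_1_eq:
  assumes "\<And>j. r j \<ge> 0"
  shows "wnorm r 1 x = (\<Sum>\<^sub>\<infinity>j. r j * \<bar>x j\<bar>)"
  using assms by (simp add: wnorm_def infsum_nonneg)

lemma wl_2_iff:
  assumes "\<And>j. a j \<ge> 0"
  shows "wl a 2 x \<longleftrightarrow> (\<lambda>j. (a j * x j)\<^sup>2) summable_on UNIV"
  using assms by (simp add: wl_def power_mult_distrib)

lemma wnorm_2_eq: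
  assumes "\<And>j. a j \<ge> 0"
  shows "wnorm a 2 x = sqrt (\<Sum>\<^sub>\<infinity>j. (a j * x j)\<^sup>2)"
  using assms by (simp add: wnorm_def power_mult_distrib powr_half_sqrt infsum_nonneg)

lemma wl_2_diff:
  assumes "\<And>j. a j \<ge> 0" "wl a 2 x" "wl a 2 y"
  shows "wl a 2 (\<lambda>j. x j - y j)"
  unfolding wl_2_iff[OF assms(1)]
proof (rule summable_on_comparison_test)
  show "(\<lambda>j. 2 * (a j * x j)\<^sup>2 + 2 * (a j * y j)\<^sup>2) summable_on UNIV"
    using assms by (intro summable_on_add summable_on_cmult_right) (simp_all add: wl_2_iff)
  show "(a j * (x j - y j))\<^sup>2 \<le> 2 * (a j * x j)\<^sup>2 + 2 * (a j * y j)\<^sup>2" for j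
  proof -
    have "(a j * (x j - y j))\<^sup>2 = (a j * x j - a j * y j)\<^sup>2" by (simp add: right_diff_distrib)
    also have "\<dots> \<le> 2 * (a j * x j)\<^sup>2 + 2 * (a j * y j)\<^sup>2"
      using power2_diff[of "a j * x j" "a j * y j"] power2_sum[of "a j * x j" "a j * y j"]
        zero_le_power2[of "a j * x j + a j * y j"] by linarith
    finally show ?thesis .
  qed
qed simp

lemma wl_2_if_abs_le:
  assumes "\<And>j. a j \<ge> 0" "wl a 2 x" "\<And>j. \<bar>z j\<bar> \<le> \<bar>x j\<bar>"
  shows "wl a 2 z"
  unfolding wl_2_iff[OF assms(1)]
proof (rule summable_on_comparison_test)
  show "(\<lambda>j. (a j * x j)\<^sup>2) summable_on UNIV" using assms(1,2) by (simp add: wl_2_iff)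
  show "(a j * z j)\<^sup>2 \<le> (a j * x j)\<^sup>2" for j
    using assms(1,3)[of j] by (simp add: abs_le_square_iff[symmetric] abs_mult mult_left_mono)
qed simp

lemma L2_set_le_wnorm_2:
  assumes "\<And>j. a j \<ge> 0" "wl a 2 z" "finite J"
  shows "L2_set (\<lambda>j. a j * z j) J \<le> wnorm a 2 z"
  unfolding L2_set_def wnorm_2_eq[OF assms(1)] using assms
  by (intro real_sqrt_le_mono finite_sum_le_infsum) (auto simp: wl_2_iff)

lemma eq_if_wnorm_2_diff_eq_0:
  assumes a_pos: "\<And>j. a j > 0" and "wl a 2 x" "wl a 2 y" and "wnorm a 2 (\<lambda>j. x j - y j) = 0"
  shows "x = y"
proof
  have a_nonneg: "\<And>j. a j \<ge> 0" using a_pos less_imp_le by blast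
  fix j
  have "(\<Sum>\<^sub>\<infinity>j. (a j * (x j - y j))\<^sup>2) = 0" using assms(4) by (simp add: wnorm_2_eq[OF a_nonneg])
  then have "(a j * (x j - y j))\<^sup>2 = 0"
    using wl_2_diff[OF a_nonneg assms(2,3)] by (intro nonneg_infsum_le_0D) (auto simp: wl_2_iff[OF a_nonneg])
  then show "x j = y j" using a_pos[of j] by simp
qed

section \<open>Sums under a weak-type bound\<close>

lemma le_dyadic_sum:
  fixes v \<alpha> :: real
  assumes "0 < v" "v \<le> \<alpha>" "\<alpha> / 2^(N+1) < v"
  shows "v \<le> (\<Sum>k\<le>N. if \<alpha> / 2^(k+1) < v then \<alpha> / 2^k else 0)"
proof -
  define m where "m = (LEAST k. \<alpha> / 2^(k+1) < v)"
  have "m \<le> N" unfolding m_def by (rule Least_le) (rule assms(3))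
  have m_lower: "\<alpha> / 2^(m+1) < v" unfolding m_def by (rule LeastI) (rule assms(3))
  have m_upper: "v \<le> \<alpha> / 2^m"
  proof (cases m)
    case (Suc p)
    then have "\<not> \<alpha> / 2^(p+1) < v" using not_less_Least[of p "\<lambda>k. \<alpha> / 2^(k+1) < v"] m_def by simp
    then show ?thesis using Suc by simp
  qed (use assms in simp)
  have "v \<le> (if \<alpha> / 2^(m+1) < v then \<alpha> / 2^m else 0)" using m_lower m_upper by simp
  also have "\<dots> \<le> (\<Sum>k\<le>N. if \<alpha> / 2^(k+1) < v then \<alpha> / 2^k else 0)"
    by (rule member_le_sum) (use \<open>m \<le> N\<close> assms in auto)
  finally show ?thesis .
qed

lemma dyadic_weak_type_series_le:
  fixes \<rho> t \<alpha> :: real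
  assumes t: "0 < t" "t < 1" and "\<rho> > 0" "\<alpha> > 0"
  shows "(\<Sum>k\<le>N. \<alpha> / 2^k * (\<rho> / (\<alpha> / 2^(k+1))) powr t)
    \<le> 2 * \<rho> powr t * \<alpha> powr (1 - t) / (2 powr (1 - t) - 1)"
proof -
  define c where "c = 2 powr t * \<rho> powr t * \<alpha> powr (1 - t)"
  define q where "q = 2 powr (t - 1)"
  have q: "0 < q" "q < 1" unfolding q_def using t by (auto intro: powr_less_one)
  have "\<alpha> / 2^k * (\<rho> / (\<alpha> / 2^(k+1))) powr t = c * q^k" for k :: nat
    using \<open>\<rho> > 0\<close> \<open>\<alpha> > 0\<close>
    by (simp add: c_def q_def powr_divide powr_mult powr_diff powr_add powr_realpow[symmetric]
        powr_powr field_simps)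
  then have "(\<Sum>k\<le>N. \<alpha> / 2^k * (\<rho> / (\<alpha> / 2^(k+1))) powr t) = c * (\<Sum>k\<le>N. q^k)"
    by (simp only: sum_distrib_left)
  also have "\<dots> \<le> c * (\<Sum>k. q^k)"
    using q by (intro mult_left_mono sum_le_suminf summable_geometric) (auto simp: c_def)
  also have "\<dots> = c * (1 / (1 - q))" using q by (simp add: suminf_geometric)
  also have "\<dots> = 2 * \<rho> powr t * \<alpha> powr (1 - t) / (2 powr (1 - t) - 1)"
    using t by (simp add: c_def q_def powr_diff field_simps flip: powr_add)
  finally show ?thesis .
qed

lemma weak_type_tail_sum_le:
  fixes w y :: "'i \<Rightarrow> real" and \<rho> t \<alpha> :: real
  assumes w: "\<And>j. w j \<ge> 0" and y: "\<And>j. y j \<ge> 0"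
    and weak: "\<And>s K. s > 0 \<Longrightarrow> finite K \<Longrightarrow> K \<subseteq> {j. s < y j} \<Longrightarrow> sum w K \<le> (\<rho> / s) powr t"
    and t: "0 < t" "t < 1" and "\<rho> > 0" "\<alpha> > 0"
    and K: "finite K" "K \<subseteq> {j. y j \<le> \<alpha>}"
  shows "(\<Sum>j\<in>K. w j * y j) \<le> 2 * \<rho> powr t * \<alpha> powr (1 - t) / (2 powr (1 - t) - 1)"
proof -
  define m where "m = Min (insert \<alpha> (y ` {j\<in>K. y j > 0}))"
  have "m > 0" using K(1) \<open>\<alpha> > 0\<close> by (simp add: m_def)
  obtain N where "(1/2::real)^N < m / \<alpha>"
    using real_arch_pow_inv[of "m / \<alpha>" "1/2::real"] \<open>m > 0\<close> \<open>\<alpha> > 0\<close> by auto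
  then have "\<alpha> / 2^(N+1) < m" using \<open>\<alpha> > 0\<close> by (simp add: field_simps power_one_over)
  \<comment> \<open>d v bounds v by the upper end of the dyadic shell of (0, \<alpha>] containing it; swapping the
    sums below puts the weak-type bound on each shell.\<close>
  define d where "d v = (\<Sum>k\<le>N. if \<alpha> / 2^(k+1) < v then \<alpha> / 2^k else (0::real))" for v
  have "w j * y j \<le> w j * d (y j)" if "j \<in> K" for j
  proof (cases "y j > 0")
    case True
    then have "m \<le> y j" using K(1) that by (simp add: m_def)
    then show ?thesis
      unfolding d_def using True that K \<open>\<alpha> / 2^(N+1) < m\<close>
      by (intro mult_left_mono le_dyadic_sum w) auto
  next
    case False
    then show ?thesis using y[of j] w[of j] \<open>\<alpha> > 0\<close> by (simp add: d_def sum_nonneg)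
  qed
  then have "(\<Sum>j\<in>K. w j * y j) \<le> (\<Sum>j\<in>K. w j * d (y j))" by (rule sum_mono)
  also have "\<dots> = (\<Sum>k\<le>N. \<alpha> / 2^k * sum w {j\<in>K. \<alpha> / 2^(k+1) < y j})"
    by (simp add: d_def sum_distrib_left sum_distrib_right sum.swap[of _ K] sum.inter_filter[OF K(1)]
        if_distrib mult.commute cong: if_cong)
  also have "\<dots> \<le> (\<Sum>k\<le>N. \<alpha> / 2^k * (\<rho> / (\<alpha> / 2^(k+1))) powr t)"
    by (intro sum_mono mult_left_mono weak) (use \<open>\<alpha> > 0\<close> K(1) in auto)
  also have "\<dots> \<le> 2 * \<rho> powr t * \<alpha> powr (1 - t) / (2 powr (1 - t) - 1)"
    by (rule dyadic_weak_type_series_le[OF t \<open>\<rho> > 0\<close> \<open>\<alpha> > 0\<close>])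
  finally show ?thesis .
qed

lemma finite_if_sums_bounded:
  fixes w :: "'i \<Rightarrow> real"
  assumes "finite {j. w j < 1}" and bounded: "\<And>K. finite K \<Longrightarrow> K \<subseteq> J \<Longrightarrow> sum w K \<le> B"
  shows "finite J"
proof -
  have "card K \<le> nat \<lceil>B\<rceil>" if "K \<subseteq> J - {j. w j < 1}" "finite K" for K
  proof -
    have "real (card K) = (\<Sum>j\<in>K. 1)" by simp
    also have "\<dots> \<le> sum w K" using that by (intro sum_mono) auto
    also have "\<dots> \<le> B" using that by (intro bounded) auto
    finally show ?thesis by linarith
  qed
  then have "finite (J - {j. w j < 1})"
    using finite_if_finite_subsets_card_bdd[of "J - {j. w j < 1}" "nat \<lceil>B\<rceil>"] by auto
  then show ?thesis using finite_Diff2[OF assms(1)] by simp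
qed

section \<open>Level sets of the k_t quasi-norm\<close>

lemma kt_norm_eq:
  assumes "\<And>j. a j > 0"
  shows "kt_norm a r t x = (SUP \<alpha>\<in>{0<..}. ennreal \<alpha> *
      epow (\<Sum>\<^sub>\<infinity>j\<in>{j. r j / (a j)\<^sup>2 * \<alpha> < \<bar>x j\<bar>}. ennreal ((r j / a j)\<^sup>2)) (1 / t))"
proof -
  have "a j powr (-2) * r j = r j / (a j)\<^sup>2" "a j powr (-2) * (r j)\<^sup>2 = (r j / a j)\<^sup>2" for j
    using assms[of j] by (simp_all add: powr_minus power_divide field_simps)
  then have "(\<Sum>\<^sub>\<infinity>j. ennreal (a j powr (-2) * (r j)\<^sup>2 * (if a j powr (-2) * r j * \<alpha> < \<bar>x j\<bar> then 1 else 0)))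
      = (\<Sum>\<^sub>\<infinity>j\<in>{j. r j / (a j)\<^sup>2 * \<alpha> < \<bar>x j\<bar>}. ennreal ((r j / a j)\<^sup>2))" for \<alpha>
    by (intro infsum_cong_neutral) auto
  then show ?thesis unfolding kt_norm_def by simp
qed

lemma level_sum_le_if_kt_norm_le:
  assumes a_pos: "\<And>j. a j > 0" and kt: "kt_norm a r t x \<le> ennreal \<rho>"
    and "t > 0" "s > 0" "\<rho> > 0"
    and K: "finite K" "K \<subseteq> {j. r j / (a j)\<^sup>2 * s < \<bar>x j\<bar>}"
  shows "(\<Sum>j\<in>K. (r j / a j)\<^sup>2) \<le> (\<rho> / s) powr t"
proof -
  define S where "S = (\<Sum>\<^sub>\<infinity>j\<in>{j. r j / (a j)\<^sup>2 * s < \<bar>x j\<bar>}. ennreal ((r j / a j)\<^sup>2))"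
  have "ennreal s * epow S (1 / t) \<le> kt_norm a r t x"
    unfolding kt_norm_eq[OF a_pos] S_def by (rule SUP_upper2[of s]) (use \<open>s > 0\<close> in auto)
  then have le: "ennreal s * epow S (1 / t) \<le> ennreal \<rho>" using kt by simp
  have "S \<noteq> \<infinity>"
  proof
    assume "S = \<infinity>"
    then have "ennreal s * epow S (1 / t) = \<infinity>" using \<open>s > 0\<close> by (simp add: epow_def ennreal_mult_eq_top_iff)
    with le show False by (simp add: top_unique)
  qed
  then have "ennreal (s * enn2real S powr (1 / t)) \<le> ennreal \<rho>"
    using le \<open>s > 0\<close> by (simp add: epow_def ennreal_mult)
  then have "s * enn2real S powr (1 / t) \<le> \<rho>" using \<open>\<rho> > 0\<close> by (simp add: ennreal_le_iff)
  then have "enn2real S powr (1 / t) \<le> \<rho> / s" using \<open>s > 0\<close> by (simp add: field_simps)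
  then have "(enn2real S powr (1 / t)) powr t \<le> (\<rho> / s) powr t" using \<open>t > 0\<close> by (intro powr_mono2) auto
  then have S_le: "enn2real S \<le> (\<rho> / s) powr t" using \<open>t > 0\<close> by (simp add: powr_powr)
  have "ennreal (\<Sum>j\<in>K. (r j / a j)\<^sup>2) = (\<Sum>\<^sub>\<infinity>j\<in>K. ennreal ((r j / a j)\<^sup>2))"
    using K(1) by (simp add: sum_ennreal)
  also have "\<dots> \<le> S" unfolding S_def using K(2) by (intro infsum_mono_neutral) (auto intro: nonneg_summable_on_complete)
  finally have "enn2real (ennreal (\<Sum>j\<in>K. (r j / a j)\<^sup>2)) \<le> enn2real S"
    using \<open>S \<noteq> \<infinity>\<close> by (intro enn2real_mono) (auto simp: less_top)
  then have "(\<Sum>j\<in>K. (r j / a j)\<^sup>2) \<le> enn2real S" by (simp add: sum_nonneg)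
  with S_le show ?thesis by simp
qed

lemma kt_norm_le_if_level_sums_le:
  assumes a_pos: "\<And>j. a j > 0"
    and finite: "\<And>\<alpha>. \<alpha> > 0 \<Longrightarrow> finite {j. r j / (a j)\<^sup>2 * \<alpha> < \<bar>x j\<bar>}"
    and bound: "\<And>\<alpha>. \<alpha> > 0 \<Longrightarrow> \<alpha> * (\<Sum>j | r j / (a j)\<^sup>2 * \<alpha> < \<bar>x j\<bar>. (r j / a j)\<^sup>2) powr (1 / t) \<le> c"
  shows "kt_norm a r t x \<le> ennreal c"
  unfolding kt_norm_eq[OF a_pos]
proof (rule SUP_least)
  fix \<alpha> :: real assume "\<alpha> \<in> {0<..}"
  then have "\<alpha> > 0" by simp
  define W where "W = (\<Sum>j | r j / (a j)\<^sup>2 * \<alpha> < \<bar>x j\<bar>. (r j / a j)\<^sup>2)"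
  have "W \<ge> 0" unfolding W_def by (simp add: sum_nonneg)
  have "(\<Sum>\<^sub>\<infinity>j\<in>{j. r j / (a j)\<^sup>2 * \<alpha> < \<bar>x j\<bar>}. ennreal ((r j / a j)\<^sup>2)) = ennreal W"
    unfolding W_def using finite[OF \<open>\<alpha> > 0\<close>] by (simp add: sum_ennreal)
  moreover have "ennreal \<alpha> * ennreal (W powr (1 / t)) \<le> ennreal c"
    using bound[OF \<open>\<alpha> > 0\<close>] \<open>\<alpha> > 0\<close> unfolding W_def[symmetric]
    by (simp add: ennreal_leI flip: ennreal_mult)
  ultimately show "ennreal \<alpha> * epow (\<Sum>\<^sub>\<infinity>j\<in>{j. r j / (a j)\<^sup>2 * \<alpha> < \<bar>x j\<bar>}. ennreal ((r j / a j)\<^sup>2)) (1 / t)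
      \<le> ennreal c"
    using \<open>W \<ge> 0\<close> by (simp add: epow_def)
qed

lemma finite_weights_below_one:
  fixes a r :: "'i \<Rightarrow> real"
  assumes a_pos: "\<And>j. a j > 0" and r_pos: "\<And>j. r j > 0"
    and ratio: "\<And>\<epsilon>. \<epsilon> > 0 \<Longrightarrow> finite {j. a j / r j > \<epsilon>}"
  shows "finite {j. (r j / a j)\<^sup>2 < 1}"
proof (rule finite_subset[OF _ ratio[of 1]])
  show "{j. (r j / a j)\<^sup>2 < 1} \<subseteq> {j. a j / r j > 1}"
  proof clarify
    fix j assume "(r j / a j)\<^sup>2 < 1"
    then have "\<bar>r j / a j\<bar> < 1" using abs_square_less_1 by blast
    then show "a j / r j > 1" using a_pos[of j] r_pos[of j] by (simp add: divide_less_eq less_divide_eq)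
  qed
qed simp

lemma finite_level_set_if_kt_norm_le:
  fixes a r p :: "'i \<Rightarrow> real"
  assumes a_pos: "\<And>j. a j > 0" and r_pos: "\<And>j. r j > 0"
    and ratio: "\<And>\<epsilon>. \<epsilon> > 0 \<Longrightarrow> finite {j. a j / r j > \<epsilon>}"
    and kt: "kt_norm a r t p \<le> ennreal \<rho>" and "t > 0" "\<rho> > 0" "\<alpha> > 0"
  shows "finite {j. r j / (a j)\<^sup>2 * \<alpha> < \<bar>p j\<bar>}"
  using finite_weights_below_one[OF a_pos r_pos ratio]
  by (rule finite_if_sums_bounded) (use level_sum_le_if_kt_norm_le[OF a_pos kt] assms(5-7) in auto)

lemma finite_level_set_if_wl_1:
  fixes a r p :: "'i \<Rightarrow> real"
  assumes a_pos: "\<And>j. a j > 0" and r_pos: "\<And>j. r j > 0"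
    and ratio: "\<And>\<epsilon>. \<epsilon> > 0 \<Longrightarrow> finite {j. a j / r j > \<epsilon>}"
    and "wl r 1 p" "\<alpha> > 0"
  shows "finite {j. r j / (a j)\<^sup>2 * \<alpha> < \<bar>p j\<bar>}"
proof (rule finite_if_sums_bounded[of "\<lambda>j. (r j / a j)\<^sup>2"])
  show "finite {j. (r j / a j)\<^sup>2 < 1}" by (rule finite_weights_below_one[OF a_pos r_pos ratio])
  fix K assume K: "finite K" "K \<subseteq> {j. r j / (a j)\<^sup>2 * \<alpha> < \<bar>p j\<bar>}"
  have "\<alpha> * (\<Sum>j\<in>K. (r j / a j)\<^sup>2) \<le> (\<Sum>j\<in>K. r j * \<bar>p j\<bar>)"
  proof (unfold sum_distrib_left, rule sum_mono)
    fix j assume "j \<in> K"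
    then have "r j * (r j / (a j)\<^sup>2 * \<alpha>) \<le> r j * \<bar>p j\<bar>"
      using K r_pos[of j] by (intro mult_left_mono) auto
    then show "\<alpha> * (r j / a j)\<^sup>2 \<le> r j * \<bar>p j\<bar>" by (simp add: power_divide power2_eq_square mult_ac)
  qed
  also have "\<dots> \<le> (\<Sum>\<^sub>\<infinity>j. r j * \<bar>p j\<bar>)"
    using \<open>wl r 1 p\<close> r_pos K(1)
    by (intro finite_sum_le_infsum) (auto simp: wl_1_iff less_imp_le)
  finally show "(\<Sum>j\<in>K. (r j / a j)\<^sup>2) \<le> (\<Sum>\<^sub>\<infinity>j. r j * \<bar>p j\<bar>) / \<alpha>"
    using \<open>\<alpha> > 0\<close> by (simp add: field_simps)
qed

lemma tail_sum_le_if_kt_norm_le: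
  fixes a r p :: "'i \<Rightarrow> real"
  assumes a_pos: "\<And>j. a j > 0" and r_pos: "\<And>j. r j > 0"
    and kt: "kt_norm a r t p \<le> ennreal \<rho>" and t: "0 < t" "t < 1" and "\<rho> > 0" "\<alpha> > 0"
    and K: "finite K" "K \<inter> {j. r j / (a j)\<^sup>2 * \<alpha> < \<bar>p j\<bar>} = {}"
  shows "(\<Sum>j\<in>K. r j * \<bar>p j\<bar>) \<le> 2 * \<rho> powr t * \<alpha> powr (1 - t) / (2 powr (1 - t) - 1)"
proof -
  define w where "w j = (r j / a j)\<^sup>2" for j
  define y where "y j = \<bar>p j\<bar> * (a j)\<^sup>2 / r j" for j
  have level: "s < y j \<longleftrightarrow> r j / (a j)\<^sup>2 * s < \<bar>p j\<bar>" for s j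
    using a_pos[of j] r_pos[of j] by (simp add: y_def field_simps)
  have "w j * y j = r j * \<bar>p j\<bar>" for j
    using a_pos[of j] r_pos[of j] by (simp add: w_def y_def power2_eq_square field_simps)
  moreover have "(\<Sum>j\<in>K. w j * y j) \<le> 2 * \<rho> powr t * \<alpha> powr (1 - t) / (2 powr (1 - t) - 1)"
  proof (rule weak_type_tail_sum_le[of w y])
    show "sum w L \<le> (\<rho> / s) powr t" if "s > 0" "finite L" "L \<subseteq> {j. s < y j}" for s L
      unfolding w_def using that t \<open>\<rho> > 0\<close> level by (intro level_sum_le_if_kt_norm_le[OF a_pos kt]) auto
    show "K \<subseteq> {j. y j \<le> \<alpha>}" using K(2) level[of \<alpha>] by (auto simp flip: not_less)
  qed (use r_pos t \<open>\<rho> > 0\<close> \<open>\<alpha> > 0\<close> K(1) in \<open>auto simp: w_def y_def less_imp_le\<close>)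
  ultimately show ?thesis by simp
qed

lemma wl_1_if_kt_norm_le:
  fixes a r p :: "'i \<Rightarrow> real"
  assumes a_pos: "\<And>j. a j > 0" and r_pos: "\<And>j. r j > 0"
    and ratio: "\<And>\<epsilon>. \<epsilon> > 0 \<Longrightarrow> finite {j. a j / r j > \<epsilon>}"
    and kt: "kt_norm a r t p \<le> ennreal \<rho>" and t: "0 < t" "t < 1" and "\<rho> > 0"
  shows "wl r 1 p"
proof -
  define J where "J = {j. r j / (a j)\<^sup>2 * 1 < \<bar>p j\<bar>}"
  have "finite J"
    unfolding J_def using finite_level_set_if_kt_norm_le[OF a_pos r_pos ratio kt t(1) \<open>\<rho> > 0\<close>, of 1] by simp
  then have "(\<lambda>j. r j * \<bar>p j\<bar>) summable_on J" by simp
  moreover have "(\<lambda>j. r j * \<bar>p j\<bar>) summable_on (- J)"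
  proof (rule nonneg_bdd_above_summable_on)
    have "(\<Sum>j\<in>K. r j * \<bar>p j\<bar>) \<le> 2 * \<rho> powr t * 1 powr (1 - t) / (2 powr (1 - t) - 1)"
      if "K \<subseteq> - J" "finite K" for K
      using that t \<open>\<rho> > 0\<close> unfolding J_def
      by (intro tail_sum_le_if_kt_norm_le[OF a_pos r_pos kt]) auto
    then show "bdd_above (sum (\<lambda>j. r j * \<bar>p j\<bar>) ` {K. K \<subseteq> - J \<and> finite K})"
      by (intro bdd_aboveI2) auto
  qed (simp add: r_pos less_imp_le)
  ultimately have "(\<lambda>j. r j * \<bar>p j\<bar>) summable_on (J \<union> - J)"
    by (rule summable_on_Un_disjoint) auto
  then show ?thesis using r_pos by (simp add: wl_1_iff less_imp_le)
qed

lemma balanced_level_powr: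
  fixes u \<rho> t :: real
  assumes "u > 0" "\<rho> > 0" "t < 2"
  defines "\<alpha> \<equiv> u powr (2 / (2 - t)) * \<rho> powr (- t / (2 - t))"
  shows "(\<rho> / \<alpha>) powr (t / 2) * u = u powr ((2 - 2*t) / (2 - t)) * \<rho> powr (t / (2 - t))"
    and "\<rho> powr t * \<alpha> powr (1 - t) = u powr ((2 - 2*t) / (2 - t)) * \<rho> powr (t / (2 - t))"
proof -
  have "\<alpha> > 0" "2 - t > 0" unfolding \<alpha>_def using assms(1-3) by simp_all
  have "ln \<alpha> = 2 / (2 - t) * ln u - t / (2 - t) * ln \<rho>"
    unfolding \<alpha>_def using assms(1-3) by (simp add: ln_mult ln_powr)
  then have ln_\<alpha>: "(2 - t) * ln \<alpha> = 2 * ln u - t * ln \<rho>"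
    using \<open>2 - t > 0\<close> by (simp add: right_diff_distrib)
  let ?R = "u powr ((2 - 2*t) / (2 - t)) * \<rho> powr (t / (2 - t))"
  have ln_R: "(2 - t) * ln ?R = (2 - 2*t) * ln u + t * ln \<rho>"
    using assms(1-3) \<open>2 - t > 0\<close> by (simp add: ln_mult ln_powr distrib_left)
  have "(2 - t) * ln ((\<rho> / \<alpha>) powr (t / 2) * u) = t / 2 * ((2 - t) * ln \<rho> - (2 - t) * ln \<alpha>) + (2 - t) * ln u"
    using assms(1-3) \<open>\<alpha> > 0\<close> by (simp add: ln_mult ln_powr ln_div field_simps)
  also have "\<dots> = (2 - t) * ln ?R" unfolding ln_\<alpha> ln_R by (simp add: field_simps)
  finally show "(\<rho> / \<alpha>) powr (t / 2) * u = ?R"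
    using assms(1-3) \<open>\<alpha> > 0\<close> \<open>2 - t > 0\<close> by simp
  have "(2 - t) * ln (\<rho> powr t * \<alpha> powr (1 - t)) = (2 - t) * t * ln \<rho> + (1 - t) * ((2 - t) * ln \<alpha>)"
    using assms(1-3) \<open>\<alpha> > 0\<close> by (simp add: ln_mult ln_powr algebra_simps)
  also have "\<dots> = (2 - t) * ln ?R" unfolding ln_\<alpha> ln_R by (simp add: algebra_simps)
  finally show "\<rho> powr t * \<alpha> powr (1 - t) = ?R"
    using assms(1-3) \<open>\<alpha> > 0\<close> \<open>2 - t > 0\<close> by simp
qed

lemma level_bound_if_powr_inequality:
  fixes \<alpha> W C L t :: real
  assumes pos: "\<alpha> > 0" "W > 0" "C > 0" "L > 0" and t: "0 < t" "t < 1"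
    and le: "2 * \<alpha> * W \<le> C * (L * \<alpha> * sqrt W) powr ((2 - 2*t) / (2 - t))"
  shows "\<alpha> * W powr (1 / t) \<le> L powr ((2 - 2*t) / t) * C powr ((2 - t) / t)"
proof -
  have "ln (2 * \<alpha> * W) \<le> ln (C * (L * \<alpha> * sqrt W) powr ((2 - 2*t) / (2 - t)))"
    using le pos by simp
  then have "ln 2 + ln \<alpha> + ln W \<le> ln C + (2 - 2*t) / (2 - t) * (ln L + ln \<alpha> + ln W / 2)"
    using pos by (simp add: ln_mult ln_powr ln_sqrt)
  then have "(2 - t) * (ln 2 + ln \<alpha> + ln W) \<le> (2 - t) * ln C + (2 - 2*t) * (ln L + ln \<alpha> + ln W / 2)"
    using t by (simp add: field_simps)
  then have "2 * ln 2 - t * ln 2 + t * ln \<alpha> + ln W \<le> (2 - 2*t) * ln L + (2 - t) * ln C"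
    by (simp add: algebra_simps)
  moreover have "t * ln 2 \<le> 2 * ln 2" using t by simp
  ultimately have "t * ln \<alpha> + ln W \<le> (2 - 2*t) * ln L + (2 - t) * ln C"
    by linarith
  then have "(t * ln \<alpha> + ln W) / t \<le> ((2 - 2*t) * ln L + (2 - t) * ln C) / t"
    using t by (intro divide_right_mono) auto
  then have "ln (\<alpha> * W powr (1 / t)) \<le> ln (L powr ((2 - 2*t) / t) * C powr ((2 - t) / t))"
    using pos t by (simp add: ln_mult ln_powr add_divide_distrib)
  then show ?thesis using pos by simp
qed

section \<open>The source condition from the k_t bound\<close>

lemma vsc_lhs_eq_infsum:
  assumes r_nonneg: "\<And>j. r j \<ge> 0" and "wl r 1 p" "wl r 1 x"
  shows "(\<lambda>j. r j * (\<bar>p j - x j\<bar> + \<bar>p j\<bar> - \<bar>x j\<bar>)) summable_on UNIV"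
    and "wnorm r 1 (\<lambda>j. p j - x j) + wnorm r 1 p - wnorm r 1 x
      = (\<Sum>\<^sub>\<infinity>j. r j * (\<bar>p j - x j\<bar> + \<bar>p j\<bar> - \<bar>x j\<bar>))"
proof -
  have sum_p: "(\<lambda>j. r j * \<bar>p j\<bar>) summable_on UNIV" and sum_x: "(\<lambda>j. r j * \<bar>x j\<bar>) summable_on UNIV"
    using assms(2,3) by (simp_all add: wl_1_iff[OF r_nonneg])
  have sum_d: "(\<lambda>j. r j * \<bar>p j - x j\<bar>) summable_on UNIV"
  proof (rule summable_on_comparison_test[OF summable_on_add[OF sum_p sum_x]])
    show "r j * \<bar>p j - x j\<bar> \<le> r j * \<bar>p j\<bar> + r j * \<bar>x j\<bar>" for j
      using r_nonneg[of j] by (simp add: mult_left_mono flip: distrib_left)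
  qed (simp add: r_nonneg)
  have expand: "r j * (\<bar>p j - x j\<bar> + \<bar>p j\<bar> - \<bar>x j\<bar>) = r j * \<bar>p j - x j\<bar> + (r j * \<bar>p j\<bar> - r j * \<bar>x j\<bar>)" for j
    by (simp add: algebra_simps)
  show "(\<lambda>j. r j * (\<bar>p j - x j\<bar> + \<bar>p j\<bar> - \<bar>x j\<bar>)) summable_on UNIV"
    unfolding expand by (intro summable_on_add summable_on_diff sum_d sum_p sum_x)
  show "wnorm r 1 (\<lambda>j. p j - x j) + wnorm r 1 p - wnorm r 1 x
      = (\<Sum>\<^sub>\<infinity>j. r j * (\<bar>p j - x j\<bar> + \<bar>p j\<bar> - \<bar>x j\<bar>))"
    unfolding expand wnorm_1_eq[OF r_nonneg]
    by (simp add: infsum_add infsum_diff summable_on_diff sum_d sum_p sum_x)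
qed

lemma vsc_lhs_le_split:
  fixes p x :: "'i \<Rightarrow> real"
  assumes a_pos: "\<And>j. a j > 0" and r_pos: "\<And>j. r j > 0"
    and "wl r 1 p" "wl r 1 x" "wl a 2 p" "wl a 2 x" "finite J"
    and tail: "\<And>K. finite K \<Longrightarrow> K \<inter> J = {} \<Longrightarrow> (\<Sum>j\<in>K. r j * \<bar>p j\<bar>) \<le> B"
  shows "wnorm r 1 (\<lambda>j. p j - x j) + wnorm r 1 p - wnorm r 1 x
      \<le> 2 * L2_set (\<lambda>j. r j / a j) J * wnorm a 2 (\<lambda>j. p j - x j) + 2 * B"
proof -
  have r_nonneg: "\<And>j. r j \<ge> 0" and a_nonneg: "\<And>j. a j \<ge> 0" using a_pos r_pos less_imp_le by blast+
  define g where "g j = r j * (\<bar>p j - x j\<bar> + \<bar>p j\<bar> - \<bar>x j\<bar>)" for j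
  note sum_g = vsc_lhs_eq_infsum(1)[OF r_nonneg assms(3,4), folded g_def]
  have g_le_diff: "g j \<le> 2 * (\<bar>r j / a j\<bar> * \<bar>a j * (p j - x j)\<bar>)" and g_le_p: "g j \<le> 2 * (r j * \<bar>p j\<bar>)" for j
  proof -
    have "\<bar>p j - x j\<bar> + \<bar>p j\<bar> - \<bar>x j\<bar> \<le> 2 * \<bar>p j - x j\<bar>" "\<bar>p j - x j\<bar> + \<bar>p j\<bar> - \<bar>x j\<bar> \<le> 2 * \<bar>p j\<bar>"
      by auto
    then show "g j \<le> 2 * (\<bar>r j / a j\<bar> * \<bar>a j * (p j - x j)\<bar>)" "g j \<le> 2 * (r j * \<bar>p j\<bar>)"
      using a_pos[of j] r_pos[of j] unfolding g_def by (auto simp: abs_mult intro: mult_left_mono)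
  qed
  have "wnorm r 1 (\<lambda>j. p j - x j) + wnorm r 1 p - wnorm r 1 x = sum g J + infsum g (- J)"
    using vsc_lhs_eq_infsum(2)[OF r_nonneg assms(3,4), folded g_def] \<open>finite J\<close>
      infsum_Un_disjoint[of g J "- J"] summable_on_subset_banach[OF sum_g]
    by (simp add: Compl_eq_Diff_UNIV)
  also have "sum g J \<le> 2 * (\<Sum>j\<in>J. \<bar>r j / a j\<bar> * \<bar>a j * (p j - x j)\<bar>)"
    unfolding sum_distrib_left by (intro sum_mono g_le_diff)
  also have "\<dots> \<le> 2 * (L2_set (\<lambda>j. r j / a j) J * L2_set (\<lambda>j. a j * (p j - x j)) J)"
    by (intro mult_left_mono L2_set_mult_ineq) simp
  also have "L2_set (\<lambda>j. a j * (p j - x j)) J \<le> wnorm a 2 (\<lambda>j. p j - x j)"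
    using wl_2_diff[OF a_nonneg assms(5,6)] \<open>finite J\<close> by (rule L2_set_le_wnorm_2[OF a_nonneg])
  also have "infsum g (- J) \<le> 2 * B"
  proof (rule infsum_le_finite_sums)
    show "g summable_on - J" using summable_on_subset_banach[OF sum_g] by blast
    show "sum g K \<le> 2 * B" if "finite K" "K \<subseteq> - J" for K
    proof -
      have "sum g K \<le> 2 * (\<Sum>j\<in>K. r j * \<bar>p j\<bar>)" unfolding sum_distrib_left by (intro sum_mono g_le_p)
      also have "\<dots> \<le> 2 * B" using tail[OF that(1)] that(2) by (simp add: disjoint_eq_subset_Compl)
      finally show ?thesis .
    qed
  qed
  finally show ?thesis by (simp add: L2_set_nonneg mult_left_mono)
qed

lemma vsc_lhs_le_if_kt_norm_le:
  fixes a r p x :: "'i \<Rightarrow> real"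
  assumes a_pos: "\<And>j. a j > 0" and r_pos: "\<And>j. r j > 0"
    and ratio: "\<And>\<epsilon>. \<epsilon> > 0 \<Longrightarrow> finite {j. a j / r j > \<epsilon>}"
    and kt: "kt_norm a r t p \<le> ennreal \<rho>" and t: "0 < t" "t < 1" and "\<rho> > 0" "\<alpha> > 0"
    and "wl a 2 p" "wl r 1 x" "wl a 2 x"
  shows "wnorm r 1 (\<lambda>j. p j - x j) + wnorm r 1 p - wnorm r 1 x
    \<le> 2 * (\<rho> / \<alpha>) powr (t / 2) * wnorm a 2 (\<lambda>j. p j - x j)
      + 2 * (2 * \<rho> powr t * \<alpha> powr (1 - t) / (2 powr (1 - t) - 1))"
proof -
  define J where "J = {j. r j / (a j)\<^sup>2 * \<alpha> < \<bar>p j\<bar>}"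
  have "finite J"
    unfolding J_def by (rule finite_level_set_if_kt_norm_le[OF a_pos r_pos ratio kt t(1) \<open>\<rho> > 0\<close> \<open>\<alpha> > 0\<close>])
  have "L2_set (\<lambda>j. r j / a j) J \<le> sqrt ((\<rho> / \<alpha>) powr t)"
    unfolding L2_set_def J_def using \<open>finite J\<close> t \<open>\<rho> > 0\<close> \<open>\<alpha> > 0\<close>
    by (intro real_sqrt_le_mono level_sum_le_if_kt_norm_le[OF a_pos kt]) (auto simp: J_def)
  also have "\<dots> = (\<rho> / \<alpha>) powr (t / 2)"
    using \<open>\<rho> > 0\<close> \<open>\<alpha> > 0\<close> by (simp add: powr_half_sqrt_powr)
  finally have heavy: "L2_set (\<lambda>j. r j / a j) J \<le> (\<rho> / \<alpha>) powr (t / 2)" .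
  have "wnorm r 1 (\<lambda>j. p j - x j) + wnorm r 1 p - wnorm r 1 x
      \<le> 2 * L2_set (\<lambda>j. r j / a j) J * wnorm a 2 (\<lambda>j. p j - x j)
        + 2 * (2 * \<rho> powr t * \<alpha> powr (1 - t) / (2 powr (1 - t) - 1))"
  proof (rule vsc_lhs_le_split[OF a_pos r_pos _ \<open>wl r 1 x\<close> \<open>wl a 2 p\<close> \<open>wl a 2 x\<close> \<open>finite J\<close>])
    show "wl r 1 p" by (rule wl_1_if_kt_norm_le[OF a_pos r_pos ratio kt t \<open>\<rho> > 0\<close>])
    show "(\<Sum>j\<in>K. r j * \<bar>p j\<bar>) \<le> 2 * \<rho> powr t * \<alpha> powr (1 - t) / (2 powr (1 - t) - 1)"
      if "finite K" "K \<inter> J = {}" for K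
      using that t \<open>\<rho> > 0\<close> \<open>\<alpha> > 0\<close> unfolding J_def by (intro tail_sum_le_if_kt_norm_le[OF a_pos r_pos kt])
  qed
  also have "\<dots> \<le> 2 * (\<rho> / \<alpha>) powr (t / 2) * wnorm a 2 (\<lambda>j. p j - x j)
      + 2 * (2 * \<rho> powr t * \<alpha> powr (1 - t) / (2 powr (1 - t) - 1))"
    using heavy by (simp add: mult_right_mono wnorm_def)
  finally show ?thesis .
qed

lemma vsc_if_kt_norm_le:
  fixes a r :: "'i \<Rightarrow> real" and F :: "('i \<Rightarrow> real) \<Rightarrow> 'y::real_normed_vector"
  assumes a_pos: "\<And>j. a j > 0" and r_pos: "\<And>j. r j > 0"
    and ratio: "\<And>\<epsilon>. \<epsilon> > 0 \<Longrightarrow> finite {j. a j / r j > \<epsilon>}"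
    and D_sub: "\<And>x. x \<in> D \<Longrightarrow> wl a 2 x"
    and "L > 0"
    and lower: "\<And>x1 x2. x1 \<in> D \<Longrightarrow> x2 \<in> D \<Longrightarrow>
        (1 / L) * wnorm a 2 (\<lambda>j. x1 j - x2 j) \<le> norm (F x1 - F x2)"
    and t: "0 < t" "t < 1" and "\<rho> > 0" and "p \<in> D"
    and kt: "kt_norm a r t p \<le> ennreal \<rho>"
  shows "vsc r F D p ((2 + 4 / (2 powr (1 - t) - 1)) * L powr ((2 - 2*t) / (2 - t)) * \<rho> powr (t / (2 - t)))
      ((2 - 2*t) / (2 - t))"
  unfolding vsc_def
proof (intro conjI ballI impI)
  show "wl r 1 p" by (rule wl_1_if_kt_norm_le[OF a_pos r_pos ratio kt t \<open>\<rho> > 0\<close>])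
  fix x assume "x \<in> D" "wl r 1 x"
  define e where "e = (2 - 2*t) / (2 - t)"
  define \<delta> where "\<delta> = norm (F p - F x)"
  have dist: "wnorm a 2 (\<lambda>j. p j - x j) \<le> L * \<delta>"
    using lower[OF \<open>p \<in> D\<close> \<open>x \<in> D\<close>] \<open>L > 0\<close> by (simp add: \<delta>_def field_simps)
  show "wnorm r 1 (\<lambda>j. p j - x j) + wnorm r 1 p - wnorm r 1 x
      \<le> (2 + 4 / (2 powr (1 - t) - 1)) * L powr e * \<rho> powr (t / (2 - t)) * norm (F p - F x) powr e"
  proof (cases "\<delta> = 0")
    case True
    moreover have "wnorm a 2 (\<lambda>j. p j - x j) \<ge> 0" by (simp add: wnorm_def)
    ultimately have "wnorm a 2 (\<lambda>j. p j - x j) = 0" using dist by simp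
    then have "p = x" by (rule eq_if_wnorm_2_diff_eq_0[OF a_pos D_sub[OF \<open>p \<in> D\<close>] D_sub[OF \<open>x \<in> D\<close>]])
    then show ?thesis by (simp add: wnorm_def)
  next
    case False
    then have "\<delta> > 0" by (simp add: \<delta>_def)
    \<comment> \<open>The level at which both terms of \<open>vsc_lhs_le_if_kt_norm_le\<close> equal Z.\<close>
    define \<alpha> where "\<alpha> = (L * \<delta>) powr (2 / (2 - t)) * \<rho> powr (- t / (2 - t))"
    define Z where "Z = (L * \<delta>) powr e * \<rho> powr (t / (2 - t))"
    have "\<alpha> > 0" using \<open>L > 0\<close> \<open>\<delta> > 0\<close> \<open>\<rho> > 0\<close> by (simp add: \<alpha>_def)
    have balance: "(\<rho> / \<alpha>) powr (t / 2) * (L * \<delta>) = Z" "\<rho> powr t * \<alpha> powr (1 - t) = Z"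
      unfolding Z_def e_def \<alpha>_def using balanced_level_powr[of "L * \<delta>" \<rho> t] \<open>L > 0\<close> \<open>\<delta> > 0\<close> \<open>\<rho> > 0\<close> t
      by auto
    have heavy: "(\<rho> / \<alpha>) powr (t / 2) * wnorm a 2 (\<lambda>j. p j - x j) \<le> Z"
      using dist balance(1) by (metis mult_left_mono powr_ge_zero)
    have "wnorm r 1 (\<lambda>j. p j - x j) + wnorm r 1 p - wnorm r 1 x
        \<le> 2 * (\<rho> / \<alpha>) powr (t / 2) * wnorm a 2 (\<lambda>j. p j - x j)
          + 2 * (2 * (\<rho> powr t * \<alpha> powr (1 - t)) / (2 powr (1 - t) - 1))"
      using vsc_lhs_le_if_kt_norm_le[OF a_pos r_pos ratio kt t \<open>\<rho> > 0\<close> \<open>\<alpha> > 0\<close>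
          D_sub[OF \<open>p \<in> D\<close>] \<open>wl r 1 x\<close> D_sub[OF \<open>x \<in> D\<close>]]
      by (simp add: mult.assoc)
    also have "\<dots> \<le> 2 * Z + 2 * (2 * Z / (2 powr (1 - t) - 1))"
      using heavy unfolding balance(2) by simp
    also have "\<dots> = (2 + 4 / (2 powr (1 - t) - 1)) * Z" by (simp add: field_simps)
    also have "\<dots> = (2 + 4 / (2 powr (1 - t) - 1)) * L powr e * \<rho> powr (t / (2 - t)) * norm (F p - F x) powr e"
      using \<open>L > 0\<close> \<open>\<delta> > 0\<close> by (simp add: Z_def \<delta>_def powr_mult)
    finally show ?thesis .
  qed
qed

section \<open>The k_t bound from the source condition\<close>

text \<open>The test element for the converse: the entries of x on the level set at \<alpha> are moved towards
  0 by exactly the level r_j a_j^-2 \<alpha>, so that both sides of the source condition become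
  explicit in the w-mass of that level set.\<close>

definition level_shrink :: "('i \<Rightarrow> real) \<Rightarrow> ('i \<Rightarrow> real) \<Rightarrow> real \<Rightarrow> ('i \<Rightarrow> real) \<Rightarrow> 'i \<Rightarrow> real" where
  "level_shrink a r \<alpha> x j =
    (if r j / (a j)\<^sup>2 * \<alpha> < \<bar>x j\<bar> then x j - sgn (x j) * (r j / (a j)\<^sup>2 * \<alpha>) else x j)"

lemma level_shrink_abs:
  assumes "r j \<ge> 0" "\<alpha> \<ge> 0"
  shows "\<bar>x j - level_shrink a r \<alpha> x j\<bar> = (if r j / (a j)\<^sup>2 * \<alpha> < \<bar>x j\<bar> then r j / (a j)\<^sup>2 * \<alpha> else 0)"
    and "\<bar>level_shrink a r \<alpha> x j\<bar> = \<bar>x j\<bar> - \<bar>x j - level_shrink a r \<alpha> x j\<bar>"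
proof -
  have "r j / (a j)\<^sup>2 * \<alpha> \<ge> 0" using assms by simp
  then show "\<bar>x j - level_shrink a r \<alpha> x j\<bar> = (if r j / (a j)\<^sup>2 * \<alpha> < \<bar>x j\<bar> then r j / (a j)\<^sup>2 * \<alpha> else 0)"
    and "\<bar>level_shrink a r \<alpha> x j\<bar> = \<bar>x j\<bar> - \<bar>x j - level_shrink a r \<alpha> x j\<bar>"
    unfolding level_shrink_def by (auto simp: sgn_if abs_if)
qed

lemma level_shrink_weighted_diff:
  assumes "a j > 0" "r j \<ge> 0" "\<alpha> \<ge> 0"
  shows "r j * \<bar>x j - level_shrink a r \<alpha> x j\<bar>
      = (if r j / (a j)\<^sup>2 * \<alpha> < \<bar>x j\<bar> then \<alpha> * (r j / a j)\<^sup>2 else 0)"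
    and "(a j * (x j - level_shrink a r \<alpha> x j))\<^sup>2
      = (if r j / (a j)\<^sup>2 * \<alpha> < \<bar>x j\<bar> then \<alpha>\<^sup>2 * (r j / a j)\<^sup>2 else 0)"
proof -
  let ?c = "r j / (a j)\<^sup>2 * \<alpha>" and ?d = "\<bar>x j - level_shrink a r \<alpha> x j\<bar>"
  have diff: "?d = (if ?c < \<bar>x j\<bar> then ?c else 0)"
    using assms(2,3) by (rule level_shrink_abs(1))
  have "r j * ?c = \<alpha> * (r j / a j)\<^sup>2" "(a j * ?c)\<^sup>2 = \<alpha>\<^sup>2 * (r j / a j)\<^sup>2"
    using assms(1) by (simp_all add: power2_eq_square field_simps)
  moreover have "(a j * (x j - level_shrink a r \<alpha> x j))\<^sup>2 = (a j * ?d)\<^sup>2"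
    by (simp add: power_mult_distrib)
  ultimately show "r j * ?d = (if ?c < \<bar>x j\<bar> then \<alpha> * (r j / a j)\<^sup>2 else 0)"
    and "(a j * (x j - level_shrink a r \<alpha> x j))\<^sup>2 = (if ?c < \<bar>x j\<bar> then \<alpha>\<^sup>2 * (r j / a j)\<^sup>2 else 0)"
    unfolding diff by auto
qed

lemma level_shrink_mem:
  assumes "shrink_closed a D" "p \<in> D" "\<And>x. x \<in> D \<Longrightarrow> wl a 2 x"
    and "\<And>j. a j \<ge> 0" "\<And>j. r j \<ge> 0" "\<alpha> \<ge> 0"
  shows "level_shrink a r \<alpha> p \<in> D"
proof -
  have shrunk: "\<bar>level_shrink a r \<alpha> p j\<bar> \<le> \<bar>p j\<bar>" for j
    using level_shrink_abs(2)[where x=p and a=a, OF assms(5,6)] by simp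
  then have "wl a 2 (level_shrink a r \<alpha> p)" by (rule wl_2_if_abs_le[OF assms(4) assms(3)[OF assms(2)]])
  then show ?thesis using assms(1,2) shrunk unfolding shrink_closed_def by blast
qed

lemma level_shrink_norms:
  fixes a r p :: "'i \<Rightarrow> real"
  assumes a_pos: "\<And>j. a j > 0" and r_pos: "\<And>j. r j > 0" and "wl r 1 p" "\<alpha> > 0"
    and finite: "finite {j. r j / (a j)\<^sup>2 * \<alpha> < \<bar>p j\<bar>}"
  defines "W \<equiv> \<Sum>j | r j / (a j)\<^sup>2 * \<alpha> < \<bar>p j\<bar>. (r j / a j)\<^sup>2"
  shows "wl r 1 (level_shrink a r \<alpha> p)"
    and "wnorm r 1 (\<lambda>j. p j - level_shrink a r \<alpha> p j) = \<alpha> * W"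
    and "wnorm r 1 p - wnorm r 1 (level_shrink a r \<alpha> p) = \<alpha> * W"
    and "wnorm a 2 (\<lambda>j. p j - level_shrink a r \<alpha> p j) = \<alpha> * sqrt W"
proof -
  define s where "s = level_shrink a r \<alpha> p"
  define J where "J = {j. r j / (a j)\<^sup>2 * \<alpha> < \<bar>p j\<bar>}"
  have r_nonneg: "\<And>j. r j \<ge> 0" and a_nonneg: "\<And>j. a j \<ge> 0" using a_pos r_pos less_imp_le by blast+
  have abs_s: "\<bar>s j\<bar> = \<bar>p j\<bar> - \<bar>p j - s j\<bar>" for j
    unfolding s_def using level_shrink_abs(2)[where x=p and a=a, OF r_nonneg] \<open>\<alpha> > 0\<close> by simp
  have r_diff: "r j * \<bar>p j - s j\<bar> = (if j \<in> J then \<alpha> * (r j / a j)\<^sup>2 else 0)"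
    and a_diff: "(a j * (p j - s j))\<^sup>2 = (if j \<in> J then \<alpha>\<^sup>2 * (r j / a j)\<^sup>2 else 0)" for j
    unfolding s_def J_def using \<open>\<alpha> > 0\<close>
    by (simp_all add: level_shrink_weighted_diff a_pos r_nonneg)
  have sum_p: "(\<lambda>j. r j * \<bar>p j\<bar>) summable_on UNIV" using \<open>wl r 1 p\<close> by (simp add: wl_1_iff[OF r_nonneg])
  have sum_s: "(\<lambda>j. r j * \<bar>s j\<bar>) summable_on UNIV"
  proof (rule summable_on_comparison_test[OF sum_p])
    show "r j * \<bar>s j\<bar> \<le> r j * \<bar>p j\<bar>" for j using abs_s[of j] r_nonneg[of j] by (simp add: mult_left_mono)
  qed (simp add: r_nonneg)
  then show "wl r 1 (level_shrink a r \<alpha> p)" by (simp add: s_def wl_1_iff[OF r_nonneg])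
  have "(\<Sum>\<^sub>\<infinity>j. r j * \<bar>p j - s j\<bar>) = (\<Sum>\<^sub>\<infinity>j\<in>J. \<alpha> * (r j / a j)\<^sup>2)"
    by (intro infsum_cong_neutral) (auto simp: r_diff)
  then have infsum_diff_r: "(\<Sum>\<^sub>\<infinity>j. r j * \<bar>p j - s j\<bar>) = \<alpha> * W"
    using finite by (simp add: sum_distrib_left W_def J_def)
  then show "wnorm r 1 (\<lambda>j. p j - level_shrink a r \<alpha> p j) = \<alpha> * W"
    by (simp add: s_def wnorm_1_eq[OF r_nonneg])
  have "wnorm r 1 p - wnorm r 1 s = (\<Sum>\<^sub>\<infinity>j. r j * \<bar>p j\<bar> - r j * \<bar>s j\<bar>)"
    by (simp add: wnorm_1_eq[OF r_nonneg] infsum_diff[OF sum_p sum_s])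
  also have "\<dots> = \<alpha> * W" using abs_s by (simp add: right_diff_distrib flip: infsum_diff_r)
  finally show "wnorm r 1 p - wnorm r 1 (level_shrink a r \<alpha> p) = \<alpha> * W" by (simp add: s_def)
  have "(\<Sum>\<^sub>\<infinity>j. (a j * (p j - s j))\<^sup>2) = (\<Sum>\<^sub>\<infinity>j\<in>J. \<alpha>\<^sup>2 * (r j / a j)\<^sup>2)"
    by (intro infsum_cong_neutral) (auto simp: a_diff)
  then have "(\<Sum>\<^sub>\<infinity>j. (a j * (p j - s j))\<^sup>2) = \<alpha>\<^sup>2 * W"
    using finite by (simp add: sum_distrib_left W_def J_def)
  then show "wnorm a 2 (\<lambda>j. p j - level_shrink a r \<alpha> p j) = \<alpha> * sqrt W"
    using \<open>\<alpha> > 0\<close> by (simp add: s_def wnorm_2_eq[OF a_nonneg] real_sqrt_mult)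
qed

lemma kt_norm_le_if_vsc:
  fixes a r :: "'i \<Rightarrow> real" and F :: "('i \<Rightarrow> real) \<Rightarrow> 'y::real_normed_vector"
  assumes a_pos: "\<And>j. a j > 0" and r_pos: "\<And>j. r j > 0"
    and ratio: "\<And>\<epsilon>. \<epsilon> > 0 \<Longrightarrow> finite {j. a j / r j > \<epsilon>}"
    and D_sub: "\<And>x. x \<in> D \<Longrightarrow> wl a 2 x" and shrink: "shrink_closed a D"
    and "L > 0"
    and upper: "\<And>x1 x2. x1 \<in> D \<Longrightarrow> x2 \<in> D \<Longrightarrow>
        norm (F x1 - F x2) \<le> L * wnorm a 2 (\<lambda>j. x1 j - x2 j)"
    and t: "0 < t" "t < 1" and "p \<in> D" and "C > 0"
    and vsc: "vsc r F D p C ((2 - 2*t) / (2 - t))"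
  shows "kt_norm a r t p \<le> ennreal (L powr ((2 - 2*t) / t) * C powr ((2 - t) / t))"
proof -
  have "wl r 1 p" and vsc_at: "\<And>x. x \<in> D \<Longrightarrow> wl r 1 x \<Longrightarrow>
      wnorm r 1 (\<lambda>j. p j - x j) + wnorm r 1 p - wnorm r 1 x \<le> C * norm (F p - F x) powr ((2 - 2*t) / (2 - t))"
    using vsc by (auto simp: vsc_def)
  have finite: "finite {j. r j / (a j)\<^sup>2 * \<alpha> < \<bar>p j\<bar>}" if "\<alpha> > 0" for \<alpha>
    by (rule finite_level_set_if_wl_1[OF a_pos r_pos ratio \<open>wl r 1 p\<close> that])
  show ?thesis
  proof (rule kt_norm_le_if_level_sums_le[OF a_pos finite])
    fix \<alpha> :: real assume "\<alpha> > 0"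
    define W where "W = (\<Sum>j | r j / (a j)\<^sup>2 * \<alpha> < \<bar>p j\<bar>. (r j / a j)\<^sup>2)"
    define s where "s = level_shrink a r \<alpha> p"
    note norms = level_shrink_norms[OF a_pos r_pos \<open>wl r 1 p\<close> \<open>\<alpha> > 0\<close> finite[OF \<open>\<alpha> > 0\<close>],
        folded W_def s_def]
    have "s \<in> D"
      unfolding s_def using a_pos r_pos \<open>\<alpha> > 0\<close>
      by (intro level_shrink_mem[OF shrink \<open>p \<in> D\<close> D_sub]) (auto simp: less_imp_le)
    show "\<alpha> * W powr (1 / t) \<le> L powr ((2 - 2*t) / t) * C powr ((2 - t) / t)"
    proof (cases "W = 0")
      case False
      then have "W > 0" by (simp add: W_def order_less_le sum_nonneg)
      have "2 * \<alpha> * W \<le> C * norm (F p - F s) powr ((2 - 2*t) / (2 - t))"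
        using vsc_at[OF \<open>s \<in> D\<close> norms(1)] norms(2,3) by simp
      also have "\<dots> \<le> C * (L * \<alpha> * sqrt W) powr ((2 - 2*t) / (2 - t))"
        using upper[OF \<open>p \<in> D\<close> \<open>s \<in> D\<close>] norms(4) \<open>C > 0\<close> t
        by (intro mult_left_mono powr_mono2) auto
      finally show ?thesis
        by (rule level_bound_if_powr_inequality[OF \<open>\<alpha> > 0\<close> \<open>W > 0\<close> \<open>C > 0\<close> \<open>L > 0\<close> t])
    qed simp
  qed
qed

theorem theorem4p3:
  fixes a r :: "'i::countable \<Rightarrow> real"
    and F :: "('i \<Rightarrow> real) \<Rightarrow> 'y::banach"
    and D :: "('i \<Rightarrow> real) set"
    and L t \<rho> :: real and xp :: "'i \<Rightarrow> real"
  assumes a_pos: "\<And>j. a j > 0" and r_pos: "\<And>j. r j > 0"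
    and ratio: "\<And>\<epsilon>. \<epsilon> > 0 \<Longrightarrow> finite {j. a j / r j > \<epsilon>}"
    and D_sub: "\<And>x. x \<in> D \<Longrightarrow> wl a 2 x"
    and D_closed: "closed_wl2 a D"
    and D_l1: "\<exists>x\<in>D. wl r 1 x"
    and L_pos: "L > 0"
    and lip: "\<And>x1 x2. x1 \<in> D \<Longrightarrow> x2 \<in> D \<Longrightarrow>
        (1 / L) * wnorm a 2 (\<lambda>j. x1 j - x2 j) \<le> norm (F x1 - F x2) \<and>
        norm (F x1 - F x2) \<le> L * wnorm a 2 (\<lambda>j. x1 j - x2 j)"
    and t: "0 < t" "t < 1"
    and rho: "\<rho> > 0"
    and xp: "xp \<in> D"
  shows "(kt_norm a r t xp \<le> ennreal \<rho> \<longrightarrow>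
            vsc r F D xp ((2 + 4 / (2 powr (1 - t) - 1)) * L powr ((2 - 2*t) / (2 - t)) * \<rho> powr (t / (2 - t)))
                ((2 - 2*t) / (2 - t)))
       \<and> (shrink_closed a D \<longrightarrow>
            vsc r F D xp ((2 + 4 / (2 powr (1 - t) - 1)) * L powr ((2 - 2*t) / (2 - t)) * \<rho> powr (t / (2 - t)))
                ((2 - 2*t) / (2 - t)) \<longrightarrow>
            kt_norm a r t xp \<le> ennreal (L powr ((2 - 2*t) / t) *
              ((2 + 4 / (2 powr (1 - t) - 1)) * L powr ((2 - 2*t) / (2 - t)) * \<rho> powr (t / (2 - t))) powr ((2 - t) / t)))"
proof -
  define C where "C = (2 + 4 / (2 powr (1 - t) - 1)) * L powr ((2 - 2*t) / (2 - t)) * \<rho> powr (t / (2 - t))"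
  have "2 powr (1 - t) > 1" using t by simp
  then have "C > 0" using L_pos rho by (simp add: C_def add_pos_nonneg)
  have lower: "(1 / L) * wnorm a 2 (\<lambda>j. x1 j - x2 j) \<le> norm (F x1 - F x2)"
    and upper: "norm (F x1 - F x2) \<le> L * wnorm a 2 (\<lambda>j. x1 j - x2 j)"
    if "x1 \<in> D" "x2 \<in> D" for x1 x2
    using lip[OF that] by auto
  show ?thesis
    using vsc_if_kt_norm_le[OF a_pos r_pos ratio D_sub L_pos lower t rho xp]
      kt_norm_le_if_vsc[OF a_pos r_pos ratio D_sub _ L_pos upper t xp \<open>C > 0\<close>]
    unfolding C_def by blast
qed

end
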